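(* For every 1-2-metric and every $\alpha>0$, the greedy-routing network creation game on it with edge price $\alpha$ admits no best response cycle.
   Context: A 1-2-metric is a finite metric space $(\mathcal{P},d)$ with $d(u,v)\in\{1,2\}$ for all distinct $u,v$. Game: agents are the points of $\mathcal{P}$; agent $u$'s strategy is $S_u\subseteq\mathcal{P}\setminus\{u\}$; a profile $\mathbf{s}$ defines the directed network with arcs $(u,v)$, $v\in S_u$, of length $d(u,v)$. A greedy path from $u$ to $v$ is a directed path $u=x_1,\dots,x_j=v$ of arcs with $d(x_i,v)>d(x_{i+1},v)$ for all $i$. $\mathrm{stretch}(u,v)$ is the minimum length of a greedy path from $u$ to $v$ divided by $d(u,v)$, or a fixed sufficiently large penalty constant $Z$ if none exists. Cost: $c_u(\mathbf{s})=\sum_{v\ne u}\mathrm{stretch}(u,v)+\alpha|S_u|$. A best response of $u$ to $\mathbf{s}$ is a strategy minimizing $c_u(\cdot,\mathbf{s}_{-u})$. A best response cycle is a sequence of profiles $\mathbf{s}_0,\dots,\mathbf{s}_k=\mathbf{s}_0$ ($k\ge1$) where each $\mathbf{s}_i$ arises from $\mathbf{s}_{i-1}$ by a single agent switching to a best response that strictly decreases its cost. *)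

theory Defs
  imports Complex_Main
begin

definition metric12 :: "'a set \<Rightarrow> ('a \<Rightarrow> 'a \<Rightarrow> real) \<Rightarrow> bool" where
  "metric12 P d \<longleftrightarrow> finite P \<and>
     (\<forall>u\<in>P. d u u = 0) \<and>
     (\<forall>u\<in>P. \<forall>v\<in>P. d u v = d v u) \<and>
     (\<forall>u\<in>P. \<forall>v\<in>P. u \<noteq> v \<longrightarrow> d u v = 1 \<or> d u v = 2) \<and>
     (\<forall>u\<in>P. \<forall>v\<in>P. \<forall>w\<in>P. d u w \<le> d u v + d v w)"

text \<open>A strategy profile: each agent u in P buys arcs to a subset of P - {u};
  outside P the profile is empty (so profiles are determined by their values on P).\<close>
definition profile :: "'a set \<Rightarrow> ('a \<Rightarrow> 'a set) \<Rightarrow> bool" where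
  "profile P s \<longleftrightarrow> (\<forall>u\<in>P. s u \<subseteq> P - {u}) \<and> (\<forall>u. u \<notin> P \<longrightarrow> s u = {})"

definition greedy_path :: "'a set \<Rightarrow> ('a \<Rightarrow> 'a \<Rightarrow> real) \<Rightarrow> ('a \<Rightarrow> 'a set)
    \<Rightarrow> 'a \<Rightarrow> 'a \<Rightarrow> 'a list \<Rightarrow> bool" where
  "greedy_path P d s u v xs \<longleftrightarrow> xs \<noteq> [] \<and> hd xs = u \<and> last xs = v \<and> set xs \<subseteq> P \<and>
     (\<forall>i. Suc i < length xs \<longrightarrow>
        xs ! (Suc i) \<in> s (xs ! i) \<and> d (xs ! i) v > d (xs ! Suc i) v)"

definition path_len :: "('a \<Rightarrow> 'a \<Rightarrow> real) \<Rightarrow> 'a list \<Rightarrow> real" where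
  "path_len d xs = (\<Sum>i<length xs - 1. d (xs ! i) (xs ! Suc i))"

definition stretch :: "'a set \<Rightarrow> ('a \<Rightarrow> 'a \<Rightarrow> real) \<Rightarrow> real \<Rightarrow> ('a \<Rightarrow> 'a set)
    \<Rightarrow> 'a \<Rightarrow> 'a \<Rightarrow> real" where
  "stretch P d Z s u v =
     (if \<exists>xs. greedy_path P d s u v xs
      then Min {path_len d xs | xs. greedy_path P d s u v xs} / d u v
      else Z)"

definition cost :: "'a set \<Rightarrow> ('a \<Rightarrow> 'a \<Rightarrow> real) \<Rightarrow> real \<Rightarrow> real \<Rightarrow> ('a \<Rightarrow> 'a set)
    \<Rightarrow> 'a \<Rightarrow> real" where
  "cost P d \<alpha> Z s u = (\<Sum>v\<in>P - {u}. stretch P d Z s u v) + \<alpha> * real (card (s u))"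

definition best_response :: "'a set \<Rightarrow> ('a \<Rightarrow> 'a \<Rightarrow> real) \<Rightarrow> real \<Rightarrow> real
    \<Rightarrow> ('a \<Rightarrow> 'a set) \<Rightarrow> 'a \<Rightarrow> 'a set \<Rightarrow> bool" where
  "best_response P d \<alpha> Z s u S \<longleftrightarrow> S \<subseteq> P - {u} \<and>
     (\<forall>S'. S' \<subseteq> P - {u} \<longrightarrow> cost P d \<alpha> Z (s(u := S)) u \<le> cost P d \<alpha> Z (s(u := S')) u)"

definition br_cycle :: "'a set \<Rightarrow> ('a \<Rightarrow> 'a \<Rightarrow> real) \<Rightarrow> real \<Rightarrow> real \<Rightarrow> bool" where
  "br_cycle P d \<alpha> Z \<longleftrightarrow> (\<exists>k::nat. \<exists>seq :: nat \<Rightarrow> ('a \<Rightarrow> 'a set).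
     k \<ge> 1 \<and> profile P (seq 0) \<and> seq k = seq 0 \<and>
     (\<forall>i<k. \<exists>u\<in>P. \<exists>S. seq (Suc i) = (seq i)(u := S) \<and>
        best_response P d \<alpha> Z (seq i) u S \<and>
        cost P d \<alpha> Z (seq (Suc i)) u < cost P d \<alpha> Z (seq i) u))"

end

theory Submission
  imports Defs
begin

text \<open>In a 1-2-metric a greedy path has at most two arcs, and every arc after the first has
  length 1; so an agent's cost depends on the other agents only through their arcs of length 1.
  Once the penalty exceeds \<open>1 + \<alpha>\<close>, a best response buys every arc of length 1, so an agent's
  length-1 arcs never change again after its first move. Around a best response cycle they are
  therefore constant, each agent faces the same cost function at every profile of the cycle, and
  the agent moving first only ever switches to minimisers of it afterwards -- yet the cycle returns
  it to its original strategy, which it strictly improved upon.\<close>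

lemma metric12_dist_cases:
  assumes "metric12 P d" "a \<in> P" "b \<in> P"
  shows "(a = b \<and> d a b = 0) \<or> (a \<noteq> b \<and> (d a b = 1 \<or> d a b = 2))"
  using assms by (cases "a = b") (auto simp: metric12_def)

lemma greedy_path_nth_mem:
  assumes "greedy_path P d s u v xs" "i < length xs"
  shows "xs ! i \<in> P"
  using assms nth_mem unfolding greedy_path_def by blast

lemma greedy_path_target_mem:
  assumes "greedy_path P d s u v xs"
  shows "v \<in> P"
  using assms last_in_set unfolding greedy_path_def by blast

lemma greedy_path_step:
  assumes "greedy_path P d s u v xs" "Suc i < length xs"
  shows "xs ! Suc i \<in> s (xs ! i)" "d (xs ! Suc i) v < d (xs ! i) v"
  using assms unfolding greedy_path_def by auto

lemma greedy_path_dist_cases: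
  assumes m: "metric12 P d" and g: "greedy_path P d s u v xs" and i: "i < length xs"
  shows "(xs ! i = v \<and> d (xs ! i) v = 0) \<or> (xs ! i \<noteq> v \<and> (d (xs ! i) v = 1 \<or> d (xs ! i) v = 2))"
  using metric12_dist_cases[OF m greedy_path_nth_mem[OF g i] greedy_path_target_mem[OF g]] .

text \<open>Distances to the target are 0, 1 or 2 and strictly decrease along a greedy path.\<close>
lemma greedy_path_dist_bound:
  assumes m: "metric12 P d" and g: "greedy_path P d s u v xs" and j: "j < length xs"
  shows "d (xs ! j) v + j \<le> 2"
  using j
proof (induction j)
  case 0
  then show ?case using greedy_path_dist_cases[OF m g, of 0] by auto
next
  case (Suc j)
  have "d (xs ! Suc j) v < d (xs ! j) v" using greedy_path_step(2)[OF g Suc.prems] .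
  then show ?case
    using Suc greedy_path_dist_cases[OF m g, of j] greedy_path_dist_cases[OF m g, of "Suc j"] by auto
qed

lemma greedy_path_length_le:
  assumes m: "metric12 P d" and g: "greedy_path P d s u v xs"
  shows "length xs \<le> 3"
proof -
  have "xs \<noteq> []" using g unfolding greedy_path_def by blast
  then have "d (xs ! (length xs - 1)) v + (length xs - 1) \<le> 2"
    using greedy_path_dist_bound[OF m g] by simp
  moreover have "d (xs ! (length xs - 1)) v \<ge> 0"
    using greedy_path_dist_cases[OF m g, of "length xs - 1"] \<open>xs \<noteq> []\<close> by auto
  ultimately show ?thesis by linarith
qed

lemma greedy_path_inner_arc_unit:
  assumes m: "metric12 P d" and g: "greedy_path P d s u v xs"
    and i: "0 < i" "Suc i < length xs"
  shows "d (xs ! i) (xs ! Suc i) = 1"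
proof -
  have "d (xs ! i) v \<le> 1" using greedy_path_dist_bound[OF m g, of i] i by simp
  moreover have "d (xs ! Suc i) v < d (xs ! i) v" using greedy_path_step(2)[OF g i(2)] .
  ultimately have "xs ! Suc i = v" "d (xs ! i) v = 1"
    using greedy_path_dist_cases[OF m g, of "Suc i"] greedy_path_dist_cases[OF m g, of i] i by auto
  then show ?thesis by simp
qed

lemma path_len_le_4:
  assumes m: "metric12 P d" and g: "greedy_path P d s u v xs"
  shows "path_len d xs \<le> 4"
proof -
  have "d (xs ! i) (xs ! Suc i) \<le> 2" if "i \<in> {..<length xs - 1}" for i
  proof -
    have "i < length xs" "Suc i < length xs" using that by auto
    from metric12_dist_cases[OF m greedy_path_nth_mem[OF g this(1)] greedy_path_nth_mem[OF g this(2)]]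
    show ?thesis by auto
  qed
  then have "path_len d xs \<le> real (card {..<length xs - 1}) * 2"
    unfolding path_len_def by (rule sum_bounded_above)
  also have "\<dots> \<le> 4" using greedy_path_length_le[OF m g] by simp
  finally show ?thesis .
qed

lemma greedy_path_endpoints_dist:
  assumes m: "metric12 P d" and g: "greedy_path P d s u v xs" and uv: "u \<noteq> v"
  shows "1 \<le> d u v"
proof -
  have "u \<in> P" using g hd_in_set unfolding greedy_path_def by blast
  from metric12_dist_cases[OF m this greedy_path_target_mem[OF g]] uv show ?thesis by auto
qed

lemma finite_greedy_path_lengths:
  assumes m: "metric12 P d"
  shows "finite {path_len d xs | xs. greedy_path P d s u v xs}"
proof -
  have "finite P" using m by (simp add: metric12_def)
  then have "finite (path_len d ` {xs. set xs \<subseteq> P \<and> length xs \<le> 3})"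
    by (intro finite_imageI finite_lists_length_le)
  moreover have "{path_len d xs | xs. greedy_path P d s u v xs}
      \<subseteq> path_len d ` {xs. set xs \<subseteq> P \<and> length xs \<le> 3}"
    using greedy_path_length_le[OF m] unfolding greedy_path_def by blast
  ultimately show ?thesis by (rule finite_subset[rotated])
qed

lemma stretch_le_greedy_path:
  assumes m: "metric12 P d" and g: "greedy_path P d s u v xs" and uv: "u \<noteq> v"
  shows "stretch P d Z s u v \<le> path_len d xs / d u v"
proof -
  have "Min {path_len d xs | xs. greedy_path P d s u v xs} \<le> path_len d xs"
    using finite_greedy_path_lengths[OF m] g by (intro Min_le) auto
  then show ?thesis
    using g greedy_path_endpoints_dist[OF m g uv] unfolding stretch_def by (auto intro: divide_right_mono)
qed

lemma stretch_attained:
  assumes m: "metric12 P d" and ex: "\<exists>xs. greedy_path P d s u v xs"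
  obtains xs where "greedy_path P d s u v xs" "stretch P d Z s u v = path_len d xs / d u v"
proof -
  have "Min {path_len d xs | xs. greedy_path P d s u v xs} \<in> {path_len d xs | xs. greedy_path P d s u v xs}"
    using finite_greedy_path_lengths[OF m] ex by (intro Min_in) auto
  then show ?thesis using that ex unfolding stretch_def by auto
qed

lemma stretch_eq_penalty:
  assumes "\<nexists>xs. greedy_path P d s u v xs"
  shows "stretch P d Z s u v = Z"
  unfolding stretch_def by (simp only: if_not_P[OF assms])

lemma stretch_le_penalty:
  assumes m: "metric12 P d" and uv: "u \<noteq> v" and Z: "4 \<le> Z"
  shows "stretch P d Z s u v \<le> Z"
proof (cases "\<exists>xs. greedy_path P d s u v xs")
  case True
  then obtain xs where g: "greedy_path P d s u v xs" by blast
  have "stretch P d Z s u v \<le> path_len d xs / d u v" using stretch_le_greedy_path[OF m g uv] .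
  also have "\<dots> \<le> 4"
    using greedy_path_endpoints_dist[OF m g uv] path_len_le_4[OF m g] by (simp add: divide_le_eq)
  also have "\<dots> \<le> Z" using Z .
  finally show ?thesis .
next
  case False
  then show ?thesis by (simp add: stretch_eq_penalty)
qed

text \<open>Buying arcs never hurts: with a penalty \<open>Z \<ge> 4\<close>, a missing greedy path is the worst case.\<close>
lemma stretch_antimono:
  assumes m: "metric12 P d" and uv: "u \<noteq> v" and Z: "4 \<le> Z" and sub: "\<And>w. s w \<subseteq> s' w"
  shows "stretch P d Z s' u v \<le> stretch P d Z s u v"
proof (cases "\<exists>xs. greedy_path P d s u v xs")
  case True
  then obtain xs where g: "greedy_path P d s u v xs"
    and eq: "stretch P d Z s u v = path_len d xs / d u v"
    using stretch_attained[OF m] by blast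
  have "greedy_path P d s' u v xs" using g sub unfolding greedy_path_def by blast
  then show ?thesis using stretch_le_greedy_path[OF m _ uv] eq by simp
next
  case False
  then show ?thesis using stretch_le_penalty[OF m uv Z] by (simp add: stretch_eq_penalty)
qed

text \<open>Only the first arc of a greedy path can have length 2, so the cost of an agent depends on
  the other agents' strategies only through their arcs of length 1.\<close>
definition unit_arcs :: "('a \<Rightarrow> 'a \<Rightarrow> real) \<Rightarrow> ('a \<Rightarrow> 'a set) \<Rightarrow> 'a \<Rightarrow> 'a set" where
  "unit_arcs d s w = {x \<in> s w. d w x = 1}"

lemma greedy_path_transfer:
  assumes m: "metric12 P d" and g: "greedy_path P d s u v xs"
    and su: "s u \<subseteq> s' u" and unit: "\<And>w. w \<in> P \<Longrightarrow> unit_arcs d s w \<subseteq> unit_arcs d s' w"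
  shows "greedy_path P d s' u v xs"
proof -
  have "xs ! Suc i \<in> s' (xs ! i)" if i: "Suc i < length xs" for i
  proof (cases "i = 0")
    case True
    have "xs ! 0 = u" using g by (auto simp: greedy_path_def hd_conv_nth)
    then show ?thesis using greedy_path_step(1)[OF g i] su True by auto
  next
    case False
    then have "xs ! Suc i \<in> unit_arcs d s (xs ! i)"
      using greedy_path_step(1)[OF g i] greedy_path_inner_arc_unit[OF m g _ i]
      unfolding unit_arcs_def by simp
    moreover have "i < length xs" using i by simp
    ultimately show ?thesis using unit[OF greedy_path_nth_mem[OF g]] unfolding unit_arcs_def by blast
  qed
  then show ?thesis using g unfolding greedy_path_def by blast
qed

lemma cost_cong_unit_arcs:
  assumes m: "metric12 P d" and su: "s u = s' u"
    and unit: "\<And>w. w \<in> P \<Longrightarrow> unit_arcs d s w = unit_arcs d s' w"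
  shows "cost P d \<alpha> Z s u = cost P d \<alpha> Z s' u"
proof -
  have same_paths: "greedy_path P d s u v = greedy_path P d s' u v" for v
    using greedy_path_transfer[OF m, of s u v _ s'] greedy_path_transfer[OF m, of s' u v _ s]
      su unit by blast
  have "stretch P d Z s u v = stretch P d Z s' u v" for v
    unfolding stretch_def same_paths ..
  then show ?thesis by (simp add: cost_def su)
qed

lemma best_response_subset:
  assumes "best_response P d \<alpha> Z s u S"
  shows "S \<subseteq> P - {u}"
  using assms unfolding best_response_def by (elim conjE)

lemma best_response_le:
  assumes "best_response P d \<alpha> Z s u S" and "S' \<subseteq> P - {u}"
  shows "cost P d \<alpha> Z (s(u := S)) u \<le> cost P d \<alpha> Z (s(u := S')) u"
  using assms unfolding best_response_def by (elim conjE allE impE)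

lemma no_greedy_path_to_unbought_neighbour:
  assumes m: "metric12 P d" and dx: "d u x = 1" and x: "x \<notin> s u"
  shows "\<not> greedy_path P d s u x xs"
proof
  assume g: "greedy_path P d s u x xs"
  have "u \<in> P" using g hd_in_set unfolding greedy_path_def by blast
  from metric12_dist_cases[OF m this greedy_path_target_mem[OF g]] dx have "u \<noteq> x" by auto
  obtain ys where xs: "xs = u # ys" using g unfolding greedy_path_def by (cases xs) auto
  with g \<open>u \<noteq> x\<close> have "ys \<noteq> []" unfolding greedy_path_def by auto
  then have len: "Suc 0 < length xs" and u: "xs ! 0 = u" using xs by auto
  have "d (xs ! Suc 0) x < 1" using greedy_path_step(2)[OF g len] u dx by simp
  then have "xs ! Suc 0 = x" using greedy_path_dist_cases[OF m g len] by auto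
  then show False using greedy_path_step(1)[OF g len] u x by simp
qed

lemma stretch_bought_unit_arc:
  assumes m: "metric12 P d" and u: "u \<in> P" and x: "x \<in> P" "x \<in> s u" and dx: "d u x = 1"
  shows "stretch P d Z s u x \<le> 1"
proof -
  have "d x x = 0" "u \<noteq> x"
    using metric12_dist_cases[OF m x(1) x(1)] metric12_dist_cases[OF m u x(1)] dx by auto
  then have "greedy_path P d s u x [u, x]"
    using u x dx unfolding greedy_path_def by (auto simp: less_Suc_eq)
  from stretch_le_greedy_path[OF m this \<open>u \<noteq> x\<close>] show ?thesis
    using dx by (simp add: path_len_def)
qed

text \<open>For \<open>Z > 1 + \<alpha>\<close>, dropping an arc of length 1 costs the penalty and saves only \<open>\<alpha>\<close>,
  since that arc is the only greedy path to its endpoint.\<close>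
lemma best_response_contains_unit_neighbours:
  assumes m: "metric12 P d" and Z: "4 \<le> Z" "1 + \<alpha> < Z"
    and br: "best_response P d \<alpha> Z s u S" and u: "u \<in> P" and x: "x \<in> P" and dx: "d u x = 1"
  shows "x \<in> S"
proof (rule ccontr)
  assume xS: "x \<notin> S"
  let ?s1 = "s(u := S)" and ?s2 = "s(u := insert x S)"
  have SP: "S \<subseteq> P - {u}" using best_response_subset[OF br] .
  have xu: "x \<in> P - {u}" using x dx metric12_dist_cases[OF m u x] by auto
  have fin: "finite (P - {u})" using m by (simp add: metric12_def)
  have "cost P d \<alpha> Z ?s1 u \<le> cost P d \<alpha> Z ?s2 u"
    using best_response_le[OF br] SP xu by simp
  have s1x: "stretch P d Z ?s1 u x = Z"
    using no_greedy_path_to_unbought_neighbour[OF m dx, of ?s1] xS by (simp add: stretch_eq_penalty)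
  have s2x: "stretch P d Z ?s2 u x \<le> 1"
    using stretch_bought_unit_arc[OF m u x _ dx] by simp
  have others: "stretch P d Z ?s2 u v \<le> stretch P d Z ?s1 u v" if "v \<in> P - {u} - {x}" for v
    using that by (intro stretch_antimono[OF m _ Z(1)]) auto
  have "(\<Sum>v\<in>P - {u}. stretch P d Z ?s2 u v)
      = stretch P d Z ?s2 u x + (\<Sum>v\<in>P - {u} - {x}. stretch P d Z ?s2 u v)"
    using sum.remove[OF fin xu] by simp
  also have "\<dots> \<le> 1 + (\<Sum>v\<in>P - {u} - {x}. stretch P d Z ?s1 u v)"
    using s2x others by (intro add_mono sum_mono) auto
  also have "\<dots> = (\<Sum>v\<in>P - {u}. stretch P d Z ?s1 u v) - Z + 1"
    using sum.remove[OF fin xu, of "stretch P d Z ?s1 u"] s1x by simp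
  finally have "cost P d \<alpha> Z ?s2 u \<le> cost P d \<alpha> Z ?s1 u - Z + 1 + \<alpha>"
    using finite_subset[OF SP fin] xS unfolding cost_def by (simp add: algebra_simps)
  with \<open>cost P d \<alpha> Z ?s1 u \<le> cost P d \<alpha> Z ?s2 u\<close> show False using Z(2) by simp
qed

lemma best_response_unit_arcs:
  assumes m: "metric12 P d" and Z: "4 \<le> Z" "1 + \<alpha> < Z"
    and br: "best_response P d \<alpha> Z s u S" and u: "u \<in> P"
  shows "unit_arcs d (s(u := S)) u = {x \<in> P. d u x = 1}"
  using best_response_contains_unit_neighbours[OF m Z br u] best_response_subset[OF br]
  unfolding unit_arcs_def by auto

lemma best_response_cong_cost:
  assumes "\<And>S. cost P d \<alpha> Z (s(u := S)) u = cost P d \<alpha> Z (s'(u := S)) u"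
  shows "best_response P d \<alpha> Z s u = best_response P d \<alpha> Z s' u"
  using assms unfolding best_response_def by simp

lemma periodic_absorbing:
  fixes g :: "nat \<Rightarrow> 'b"
  assumes step: "\<And>i. i < k \<Longrightarrow> g (Suc i) = g i \<or> Q (g (Suc i))" and per: "g k = g 0"
    and j: "j < k" "Q (g (Suc j))" and i: "i \<le> k"
  shows "Q (g i)"
proof -
  have from_j: "Q (g m)" if "Suc j \<le> m" "m \<le> k" for m
    using that
  proof (induction m rule: dec_induct)
    case base
    show ?case using j(2) .
  next
    case (step n)
    then show ?case using assms(1)[of n] by auto
  qed
  have "Q (g 0)" using from_j[of k] j(1) per by simp
  then show ?thesis using i
  proof (induction i)
    case 0
    then show ?case by simp
  next
    case (Suc i)
    then show ?case using step[of i] by auto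
  qed
qed

lemma periodic_constant_if_reset:
  fixes g :: "nat \<Rightarrow> 'b"
  assumes step: "\<And>i. i < k \<Longrightarrow> g (Suc i) = g i \<or> g (Suc i) = c" and per: "g k = g 0"
    and i: "i \<le> k"
  shows "g i = g 0"
proof (cases "\<exists>j<k. g (Suc j) \<noteq> g j")
  case True
  then obtain j where j: "j < k" "g (Suc j) = c" using step by blast
  show ?thesis
    using periodic_absorbing[of k g "\<lambda>y. y = c", OF step per j] i by simp
next
  case False
  then show ?thesis using i by (induction i) auto
qed

lemma unit_arcs_constant_along_best_responses:
  assumes m: "metric12 P d" and Z: "4 \<le> Z" "1 + \<alpha> < Z"
    and steps: "\<And>i. i < k \<Longrightarrow> \<exists>u\<in>P. \<exists>S.
      seq (Suc i) = (seq i)(u := S) \<and> best_response P d \<alpha> Z (seq i) u S"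
    and per: "seq k = seq 0" and i: "i \<le> k"
  shows "unit_arcs d (seq i) w = unit_arcs d (seq 0) w"
proof (rule periodic_constant_if_reset[where g = "\<lambda>i. unit_arcs d (seq i) w", OF _ _ i])
  fix i assume "i < k"
  then obtain u S where "u \<in> P" "seq (Suc i) = (seq i)(u := S)" "best_response P d \<alpha> Z (seq i) u S"
    using steps by blast
  then show "unit_arcs d (seq (Suc i)) w = unit_arcs d (seq i) w
      \<or> unit_arcs d (seq (Suc i)) w = {x \<in> P. d w x = 1}"
    using best_response_unit_arcs[OF m Z] by (cases "w = u") (auto simp: unit_arcs_def)
qed (simp add: per)

lemma best_response_constant_along_best_responses:
  assumes m: "metric12 P d" and Z: "4 \<le> Z" "1 + \<alpha> < Z"
    and steps: "\<And>i. i < k \<Longrightarrow> \<exists>u\<in>P. \<exists>S.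
      seq (Suc i) = (seq i)(u := S) \<and> best_response P d \<alpha> Z (seq i) u S"
    and per: "seq k = seq 0" and i: "i \<le> k"
  shows "best_response P d \<alpha> Z (seq i) u = best_response P d \<alpha> Z (seq 0) u"
  using unit_arcs_constant_along_best_responses[OF m Z steps per i]
  by (intro best_response_cong_cost cost_cong_unit_arcs[OF m]) (simp_all add: unit_arcs_def)

theorem theorem2p10:
  fixes P :: "'a set" and d :: "'a \<Rightarrow> 'a \<Rightarrow> real" and \<alpha> :: real
  assumes "metric12 P d" and "\<alpha> > 0"
  shows "\<exists>Z0. \<forall>Z\<ge>Z0. \<not> br_cycle P d \<alpha> Z"
proof (intro exI allI impI notI)
  note m = assms(1)
  fix Z assume "4 + \<alpha> \<le> Z" and "br_cycle P d \<alpha> Z"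
  then have Z: "4 \<le> Z" "1 + \<alpha> < Z" using assms(2) by auto
  obtain k seq where k: "1 \<le> k" "seq k = seq 0" and steps: "\<forall>i<k. \<exists>u\<in>P. \<exists>S.
      seq (Suc i) = (seq i)(u := S) \<and> best_response P d \<alpha> Z (seq i) u S \<and>
      cost P d \<alpha> Z (seq (Suc i)) u < cost P d \<alpha> Z (seq i) u"
    using \<open>br_cycle P d \<alpha> Z\<close> unfolding br_cycle_def by blast
  have br_same: "best_response P d \<alpha> Z (seq i) u = best_response P d \<alpha> Z (seq 0) u" if "i \<le> k" for i u
    by (rule best_response_constant_along_best_responses[OF m Z _ k(2) that]) (use steps in blast)
  obtain u S where first: "seq (Suc 0) = (seq 0)(u := S)" "best_response P d \<alpha> Z (seq 0) u S"
      "cost P d \<alpha> Z (seq (Suc 0)) u < cost P d \<alpha> Z (seq 0) u"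
    using steps k(1) by auto
  have "best_response P d \<alpha> Z (seq 0) u (seq i u)" if "i \<le> k" for i
  proof (rule periodic_absorbing[where g = "\<lambda>i. seq i u" and j = 0, OF _ _ _ _ that])
    fix i assume "i < k"
    then obtain v S' where "seq (Suc i) = (seq i)(v := S')" "best_response P d \<alpha> Z (seq i) v S'"
      using steps by blast
    then show "seq (Suc i) u = seq i u \<or> best_response P d \<alpha> Z (seq 0) u (seq (Suc i) u)"
      using br_same[of i] \<open>i < k\<close> by (cases "v = u") auto
  qed (use k first(1,2) in simp_all)
  from best_response_le[OF this[of 0] best_response_subset[OF first(2)]]
  show False using first by simp
qed

end
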